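(* Let $G$ be a finite group. Then there exist a finite group $\widetilde G$ and a surjective group homomorphism $\varphi \colon \widetilde G \to G$ such that for any two subgroups $G_1, G_2 \le G$ that are not conjugate in $G$, the pre-images $\varphi^{-1}(G_1)$ and $\varphi^{-1}(G_2)$ are not isomorphic (as abstract groups). *)

theory Defs
  imports "HOL-Algebra.Algebra"
begin

definition conjugate_in :: "('a, 'b) monoid_scheme \<Rightarrow> 'a set \<Rightarrow> 'a set \<Rightarrow> bool" where
  "conjugate_in G H1 H2 \<longleftrightarrow>
     (\<exists>g \<in> carrier G. H2 = (\<lambda>h. g \<otimes>\<^bsub>G\<^esub> h \<otimes>\<^bsub>G\<^esub> inv\<^bsub>G\<^esub> g) ` H1)"

definition preimage_in :: "('c, 'd) monoid_scheme \<Rightarrow> ('c \<Rightarrow> 'a) \<Rightarrow> 'a set \<Rightarrow> 'c set" where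
  "preimage_in Gt \<phi> H = {x \<in> carrier Gt. \<phi> x \<in> H}"

end

theory Submission
  imports Defs
begin

(* Let q be an odd prime not dividing |G|, let G act on a finite set Om, and let W be the wreath
   product of the dihedral group Z/q x| {1, -1} of order 2q with G over Om, phi : W -> G the
   projection. For a subgroup H of G, the normal subgroups of order q of phi^-1(H) are exactly the
   copies of Z/q sitting in the coordinates fixed by H: such a subgroup lies in the base (Z/q)^Om,
   because q is odd and does not divide |G|, and conjugating one of its elements by the sign vector
   that is -1 off a coordinate x produces the copy at x, which is then normalised by phi^-1(H) only
   if x is H-fixed. So the number of H-fixed points of Om is an isomorphism invariant of phi^-1(H).
   Taking for Om the disjoint union of B^i copies of G/M_i, where M_0, ..., M_(n-1) enumerate the
   subgroups of G and B > |G|, this number is written in base B with the digits |(G/M_i)^H|; and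
   H1, H2 are conjugate as soon as |(G/H1)^H1| = |(G/H1)^H2| and |(G/H2)^H2| = |(G/H2)^H1|, since
   H2 fixes a coset a H1 iff a^-1 H2 a is contained in H1. *)

section \<open>Normal subgroups of prime order\<close>

lemma (in group_hom) subgroup_preimage:
  assumes "subgroup K H"
  shows "subgroup {x \<in> carrier G. h x \<in> K} G"
proof (rule G.subgroupI)
  show "{x \<in> carrier G. h x \<in> K} \<noteq> {}"
    using subgroup.one_closed[OF assms] by force
qed (use subgroup.m_inv_closed[OF assms] subgroup.m_closed[OF assms] in auto)

lemma (in group) normal_iff_left_commute:
  "N \<lhd> G \<longleftrightarrow> subgroup N G \<and> (\<forall>x\<in>carrier G. \<forall>h\<in>N. \<exists>h'\<in>N. x \<otimes> h = h' \<otimes> x)"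
proof
  assume N: "N \<lhd> G"
  have "\<exists>h'\<in>N. x \<otimes> h = h' \<otimes> x" if x: "x \<in> carrier G" and h: "h \<in> N" for x h
  proof
    have "h \<in> carrier G" using subgroup.mem_carrier[OF normal_imp_subgroup[OF N] h] .
    then show "x \<otimes> h = x \<otimes> h \<otimes> inv x \<otimes> x" using x by (simp add: m_assoc)
    show "x \<otimes> h \<otimes> inv x \<in> N" using normal_invE(2)[OF N x h] .
  qed
  then show "subgroup N G \<and> (\<forall>x\<in>carrier G. \<forall>h\<in>N. \<exists>h'\<in>N. x \<otimes> h = h' \<otimes> x)"
    using normal_imp_subgroup[OF N] by simp
next
  assume N: "subgroup N G \<and> (\<forall>x\<in>carrier G. \<forall>h\<in>N. \<exists>h'\<in>N. x \<otimes> h = h' \<otimes> x)"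
  show "N \<lhd> G"
  proof (rule normal_invI)
    show "subgroup N G" using N by (rule conjunct1)
    fix x h assume x: "x \<in> carrier G" and h: "h \<in> N"
    then obtain h' where h': "h' \<in> N" "x \<otimes> h = h' \<otimes> x" using N by meson
    have "h' \<in> carrier G" using subgroup.mem_carrier[OF conjunct1[OF N] h'(1)] .
    then have "x \<otimes> h \<otimes> inv x = h'" using x h'(2) by (simp add: m_assoc)
    then show "x \<otimes> h \<otimes> inv x \<in> N" using h'(1) by simp
  qed
qed

lemma (in group) normal_in_subgroup_iff:
  assumes K: "subgroup K G"
  shows "N \<lhd> G\<lparr>carrier := K\<rparr> \<longleftrightarrow>
         subgroup N G \<and> N \<subseteq> K \<and> (\<forall>x\<in>K. \<forall>h\<in>N. \<exists>h'\<in>N. x \<otimes> h = h' \<otimes> x)"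
proof -
  have "subgroup N (G\<lparr>carrier := K\<rparr>) \<longleftrightarrow> subgroup N G \<and> N \<subseteq> K"
  proof
    assume "subgroup N (G\<lparr>carrier := K\<rparr>)"
    then show "subgroup N G \<and> N \<subseteq> K"
      using incl_subgroup[OF K] subgroup.subset by force
  qed (use subgroup_incl[OF _ K] in blast)
  then show ?thesis
    using group.normal_iff_left_commute[OF subgroup_imp_group[OF K]] by simp
qed

definition normal_subgroups_of_order :: "('a, 'b) monoid_scheme \<Rightarrow> nat \<Rightarrow> 'a set set" where
  "normal_subgroups_of_order G n = {N. N \<lhd> G \<and> card N = n}"

lemma normal_subgroups_of_order_subset:
  "N \<in> normal_subgroups_of_order G n \<Longrightarrow> N \<subseteq> carrier G"
  using normal_imp_subgroup subgroup.subset unfolding normal_subgroups_of_order_def by blast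

lemma iso_image_normal_subgroups_of_order:
  assumes "group G" and "group H" and h: "h \<in> iso G H"
  shows "(\<lambda>N. h ` N) ` normal_subgroups_of_order G n \<subseteq> normal_subgroups_of_order H n"
proof clarify
  fix N assume N: "N \<in> normal_subgroups_of_order G n"
  have "inj_on h N"
    using h normal_subgroups_of_order_subset[OF N] unfolding iso_def bij_betw_def
    by (blast intro: inj_on_subset)
  then show "h ` N \<in> normal_subgroups_of_order H n"
    using N iso_normal_subgroup[OF h assms(1,2)]
    unfolding normal_subgroups_of_order_def by (simp add: card_image)
qed

lemma card_normal_subgroups_of_order_iso:
  assumes "group G" and "group H" and "G \<cong> H"
  shows "card (normal_subgroups_of_order G n) = card (normal_subgroups_of_order H n)"
proof -
  obtain h where h: "h \<in> iso G H" using assms(3) unfolding is_iso_def by blast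
  define h' where "h' = inv_into (carrier G) h"
  have h': "h' \<in> iso H G" unfolding h'_def using group.iso_set_sym[OF assms(1) h] .
  have bij: "bij_betw h (carrier G) (carrier H)" using h unfolding iso_def by blast
  have "bij_betw (\<lambda>N. h ` N) (normal_subgroups_of_order G n) (normal_subgroups_of_order H n)"
  proof (rule bij_betw_byWitness[where f' = "\<lambda>N. h' ` N"])
    show "\<forall>N\<in>normal_subgroups_of_order G n. h' ` h ` N = N"
      using normal_subgroups_of_order_subset[of _ G n] bij unfolding h'_def
      by (metis bij_betw_def inv_into_image_cancel)
    show "\<forall>N\<in>normal_subgroups_of_order H n. h ` h' ` N = N"
      using normal_subgroups_of_order_subset[of _ H n] bij unfolding h'_def
      by (metis bij_betw_def image_inv_into_cancel)
  qed (use iso_image_normal_subgroups_of_order[OF assms(1,2) h]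
           iso_image_normal_subgroups_of_order[OF assms(2,1) h'] in auto)
  then show ?thesis by (rule bij_betw_same_card)
qed

lemma (in group) pow_card_subgroup_eq_one:
  assumes "subgroup L G" and "l \<in> L"
  shows "l [^] card L = \<one>"
proof -
  have "l [^]\<^bsub>G\<lparr>carrier := L\<rparr>\<^esub> order (G\<lparr>carrier := L\<rparr>) = \<one>\<^bsub>G\<lparr>carrier := L\<rparr>\<^esub>"
    using group.pow_order_eq_1[OF subgroup_imp_group[OF assms(1)]] assms(2) by simp
  then show ?thesis unfolding order_def using nat_pow_consistent[of l "card L" L] by simp
qed

lemma (in group_hom) hom_eq_one_on_prime_order_subgroup:
  assumes q: "Factorial_Ring.prime q" and "\<not> q dvd order H"
    and L: "subgroup L G" and "card L = q" and l: "l \<in> L"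
  shows "h l = \<one>\<^bsub>H\<^esub>"
proof -
  have lG: "l \<in> carrier G" using subgroup.mem_carrier[OF L l] .
  have "h l [^]\<^bsub>H\<^esub> q = h (l [^] q)" using hom_nat_pow[OF lG] by simp
  also have "\<dots> = \<one>\<^bsub>H\<^esub>" using G.pow_card_subgroup_eq_one[OF L l] \<open>card L = q\<close> by simp
  finally have "h l [^]\<^bsub>H\<^esub> q = \<one>\<^bsub>H\<^esub>" .
  then have "H.ord (h l) dvd q" using H.pow_eq_id lG by simp
  then have "H.ord (h l) = 1 \<or> H.ord (h l) = q" using q by (simp add: prime_nat_iff)
  moreover have "H.ord (h l) dvd order H" using H.ord_dvd_group_order lG by simp
  ultimately have "H.ord (h l) = 1" using assms(2) by auto
  then show ?thesis using H.ord_eq_1 lG by simp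
qed

lemma (in group) prime_order_subgroups_eq:
  assumes q: "Factorial_Ring.prime q" and A: "subgroup A G" and B: "subgroup B G"
    and cardA: "card A = q" and cardB: "card B = q" and x: "x \<in> A" "x \<in> B" "x \<noteq> \<one>"
  shows "A = B"
proof -
  have fin: "finite A" "finite B" using cardA cardB q prime_gt_0_nat card_ge_0_finite by metis+
  have AB: "subgroup (A \<inter> B) (G\<lparr>carrier := A\<rparr>)"
    using subgroup_incl[OF subgroups_Inter_pair[OF A B] A] by simp
  have "card (A \<inter> B) dvd order (G\<lparr>carrier := A\<rparr>)"
    unfolding group.lagrange[OF subgroup_imp_group[OF A] AB, symmetric] by (rule dvd_triv_right)
  then have "card (A \<inter> B) = 1 \<or> card (A \<inter> B) = q"
    using q cardA by (simp add: order_def prime_nat_iff)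
  moreover have "card {\<one>, x} \<le> card (A \<inter> B)"
    using x subgroup.one_closed[OF A] subgroup.one_closed[OF B] fin by (intro card_mono) auto
  ultimately have "card (A \<inter> B) = q" using x(3) by auto
  then have "A \<inter> B = A" and "A \<inter> B = B"
    using card_subset_eq[OF fin(1) Int_lower1] card_subset_eq[OF fin(2) Int_lower2] cardA cardB by auto
  then show ?thesis by simp
qed

section \<open>Detecting conjugacy by fixed points\<close>

definition fixed_lcosets :: "('a, 'b) monoid_scheme \<Rightarrow> 'a set \<Rightarrow> 'a set \<Rightarrow> 'a set set" where
  "fixed_lcosets G M H = {C \<in> lcosets\<^bsub>G\<^esub> M. \<forall>h\<in>H. h <#\<^bsub>G\<^esub> C = C}"

context group
begin

lemma lcos_closed_lcosets:
  assumes "M \<subseteq> carrier G" and "g \<in> carrier G" and "C \<in> lcosets M"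
  shows "g <# C \<in> lcosets M"
proof -
  obtain a where a: "a \<in> carrier G" "C = a <# M" using assms(3) unfolding LCOSETS_def by blast
  then have "g <# C = (g \<otimes> a) <# M" using lcos_m_assoc assms(1,2) by simp
  then show ?thesis using a(1) assms(2) unfolding LCOSETS_def by blast
qed

lemma lcos_mult_lcosets:
  assumes "M \<subseteq> carrier G" and "g \<in> carrier G" and "h \<in> carrier G" and "C \<in> lcosets M"
  shows "(g \<otimes> h) <# C = g <# (h <# C)"
proof -
  obtain a where a: "a \<in> carrier G" "C = a <# M" using assms(4) unfolding LCOSETS_def by blast
  then show ?thesis using assms(1-3) by (simp add: lcos_m_assoc m_assoc)
qed

lemma lcos_one_lcosets: "M \<subseteq> carrier G \<Longrightarrow> C \<in> lcosets M \<Longrightarrow> \<one> <# C = C"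
  unfolding LCOSETS_def using lcos_mult_one l_coset_subset_G by auto

lemma finite_lcosets: "finite (carrier G) \<Longrightarrow> finite (lcosets M)"
  unfolding LCOSETS_def by simp

lemma card_lcosets_le:
  assumes "finite (carrier G)"
  shows "card (lcosets M) \<le> card (carrier G)"
proof -
  have "lcosets M = (\<lambda>a. a <# M) ` carrier G" unfolding LCOSETS_def by blast
  then show ?thesis using card_image_le[OF assms] by simp
qed

lemma self_in_fixed_lcosets:
  assumes "subgroup H G"
  shows "H \<in> fixed_lcosets G H H"
proof -
  have "H = \<one> <# H" using lcos_mult_one subgroup.subset[OF assms] by simp
  then have "H \<in> lcosets H" unfolding LCOSETS_def by blast
  then show ?thesis
    unfolding fixed_lcosets_def using coset_join3[OF _ assms] subgroup.mem_carrier[OF assms] by simp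
qed

lemma subconjugate_if_fixed_lcoset:
  assumes M: "subgroup M G" and H: "H \<subseteq> carrier G" and C: "C \<in> fixed_lcosets G M H"
  shows "\<exists>a\<in>carrier G. H \<subseteq> (\<lambda>x. a \<otimes> x \<otimes> inv a) ` M"
proof -
  obtain a where a: "a \<in> carrier G" "C = a <# M"
    using C unfolding fixed_lcosets_def LCOSETS_def by blast
  have "h \<in> (\<lambda>x. a \<otimes> x \<otimes> inv a) ` M" if h: "h \<in> H" for h
  proof -
    have "h \<otimes> a \<in> h <# C" using lcos_self[OF a(1) M] a(2) unfolding l_coset_def by blast
    also have "h <# C = a <# M" using C h a(2) unfolding fixed_lcosets_def by blast
    finally obtain m where m: "m \<in> M" "h \<otimes> a = a \<otimes> m" unfolding l_coset_def by blast
    have "h = a \<otimes> m \<otimes> inv a"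
      using m(2) a(1) subsetD[OF H h] subgroup.mem_carrier[OF M m(1)]
      by (metis inv_solve_right' m_closed)
    then show ?thesis using m(1) by blast
  qed
  then show ?thesis using a(1) by blast
qed

lemma conjugate_in_if_subconjugate_both:
  assumes "finite H1" and "finite H2"
    and "a \<in> carrier G" and a: "H2 \<subseteq> (\<lambda>x. a \<otimes> x \<otimes> inv a) ` H1"
    and b: "H1 \<subseteq> (\<lambda>x. b \<otimes> x \<otimes> inv b) ` H2"
  shows "conjugate_in G H1 H2"
proof -
  have "card ((\<lambda>x. a \<otimes> x \<otimes> inv a) ` H1) \<le> card H1" by (rule card_image_le[OF assms(1)])
  also have "\<dots> \<le> card ((\<lambda>x. b \<otimes> x \<otimes> inv b) ` H2)" using card_mono[OF _ b] assms(2) by simp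
  also have "\<dots> \<le> card H2" by (rule card_image_le[OF assms(2)])
  finally have "H2 = (\<lambda>x. a \<otimes> x \<otimes> inv a) ` H1"
    using card_seteq[OF _ a] assms(1) by blast
  then show ?thesis unfolding conjugate_in_def using assms(3) by blast
qed

lemma conjugate_in_if_card_fixed_lcosets_eq:
  assumes "finite (carrier G)" and H1: "subgroup H1 G" and H2: "subgroup H2 G"
    and eq: "\<And>M. subgroup M G \<Longrightarrow> card (fixed_lcosets G M H1) = card (fixed_lcosets G M H2)"
  shows "conjugate_in G H1 H2"
proof -
  have fin: "finite (fixed_lcosets G M H)" for M H
    using finite_lcosets[OF assms(1)] unfolding fixed_lcosets_def by simp
  have subconj: "\<exists>a\<in>carrier G. Hb \<subseteq> (\<lambda>x. a \<otimes> x \<otimes> inv a) ` Ha"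
    if Ha: "subgroup Ha G" and Hb: "subgroup Hb G"
      and "card (fixed_lcosets G Ha Ha) = card (fixed_lcosets G Ha Hb)" for Ha Hb
  proof -
    have "fixed_lcosets G Ha Hb \<noteq> {}"
      using that(3) self_in_fixed_lcosets[OF Ha] fin by (metis card_0_eq empty_iff)
    then obtain C where "C \<in> fixed_lcosets G Ha Hb" by blast
    then show ?thesis using subconjugate_if_fixed_lcoset[OF Ha subgroup.subset[OF Hb]] by blast
  qed
  obtain a where "a \<in> carrier G" "H2 \<subseteq> (\<lambda>x. a \<otimes> x \<otimes> inv a) ` H1"
    using subconj[OF H1 H2] eq[OF H1] by blast
  moreover obtain b where "H1 \<subseteq> (\<lambda>x. b \<otimes> x \<otimes> inv b) ` H2"
    using subconj[OF H2 H1] eq[OF H2] by metis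
  moreover have "finite H1" "finite H2"
    using subgroup.subset[OF H1] subgroup.subset[OF H2] assms(1) by (auto intro: finite_subset)
  ultimately show ?thesis using conjugate_in_if_subconjugate_both by blast
qed

end

lemma base_digits_eq_if_sum_eq:
  fixes u v :: "nat \<Rightarrow> nat"
  assumes "\<forall>i<n. u i < B" and "\<forall>i<n. v i < B"
    and "(\<Sum>i<n. B ^ i * u i) = (\<Sum>i<n. B ^ i * v i)"
  shows "\<forall>i<n. u i = v i"
  using assms
proof (induction n arbitrary: u v)
  case (Suc n)
  have split: "(\<Sum>i<Suc n. B ^ i * w i) = w 0 + B * (\<Sum>i<n. B ^ i * w (Suc i))" for w
    by (simp only: sum.lessThan_Suc_shift) (simp add: sum_distrib_left mult.assoc)
  have sums: "u 0 + B * (\<Sum>i<n. B ^ i * u (Suc i)) = v 0 + B * (\<Sum>i<n. B ^ i * v (Suc i))"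
    using Suc.prems(3) unfolding split .
  have "(u 0 + B * (\<Sum>i<n. B ^ i * u (Suc i))) mod B = (v 0 + B * (\<Sum>i<n. B ^ i * v (Suc i))) mod B"
    using sums by (rule arg_cong)
  then have head: "u 0 = v 0" using Suc.prems(1,2) by simp
  moreover have "0 < B" using Suc.prems(1) by auto
  ultimately have "(\<Sum>i<n. B ^ i * u (Suc i)) = (\<Sum>i<n. B ^ i * v (Suc i))"
    using sums by simp
  moreover have "\<forall>i<n. u (Suc i) < B" "\<forall>i<n. v (Suc i) < B"
    using Suc.prems(1,2) by auto
  ultimately have "\<forall>i<n. u (Suc i) = v (Suc i)"
    using Suc.IH[of "\<lambda>i. u (Suc i)" "\<lambda>i. v (Suc i)"] by blast
  with head show ?case by (simp only: All_less_Suc2)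
qed simp

text \<open>The action is extended by the identity outside \<open>Om\<close>, so that functions on \<open>Om\<close> that vanish
  outside it can be transported along \<open>act g\<close> without case distinctions.\<close>
locale set_action = group G for G :: "('a, 'b) monoid_scheme" (structure) +
  fixes Om :: "'x set" and act :: "'a \<Rightarrow> 'x \<Rightarrow> 'x"
  assumes act_closed: "g \<in> carrier G \<Longrightarrow> z \<in> Om \<Longrightarrow> act g z \<in> Om"
    and act_outside: "g \<in> carrier G \<Longrightarrow> z \<notin> Om \<Longrightarrow> act g z = z"
    and act_one: "act \<one> z = z"
    and act_mult: "g \<in> carrier G \<Longrightarrow> h \<in> carrier G \<Longrightarrow> act (g \<otimes> h) z = act g (act h z)"
begin

definition fixed_points :: "'a set \<Rightarrow> 'x set" where
  "fixed_points H = {z \<in> Om. \<forall>h\<in>H. act h z = z}"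

lemma act_inv_act: "g \<in> carrier G \<Longrightarrow> act (inv g) (act g z) = z"
  by (metis act_mult act_one inv_closed l_inv)

lemma act_act_inv: "g \<in> carrier G \<Longrightarrow> act g (act (inv g) z) = z"
  by (metis act_mult act_one inv_closed r_inv)

lemma act_mem_iff: "g \<in> carrier G \<Longrightarrow> act g z \<in> Om \<longleftrightarrow> z \<in> Om"
  using act_closed act_outside by metis

end

definition lcoset_copies ::
    "('a, 'b) monoid_scheme \<Rightarrow> (nat \<Rightarrow> 'a set) \<Rightarrow> nat \<Rightarrow> nat \<Rightarrow> ((nat \<times> nat) \<times> 'a set) set" where
  "lcoset_copies G M n B = (\<Union>i<n. ({i} \<times> {..<B ^ i}) \<times> lcosets\<^bsub>G\<^esub> (M i))"

definition copies_act :: "('a, 'b) monoid_scheme \<Rightarrow> ('i \<times> 'a set) set \<Rightarrow> 'a \<Rightarrow> 'i \<times> 'a set \<Rightarrow> 'i \<times> 'a set" where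
  "copies_act G Om g z = (if z \<in> Om then (fst z, g <#\<^bsub>G\<^esub> snd z) else z)"

context group
begin

lemma set_action_lcoset_copies:
  assumes "\<And>i. i < n \<Longrightarrow> subgroup (M i) G"
  shows "set_action G (lcoset_copies G M n B) (copies_act G (lcoset_copies G M n B))"
    (is "set_action G ?Om ?act")
proof -
  have M: "i < n \<Longrightarrow> M i \<subseteq> carrier G" for i using assms subgroup.subset by blast
  have closed: "?act g z \<in> ?Om" if "g \<in> carrier G" "z \<in> ?Om" for g z
    using that lcos_closed_lcosets[OF M] by (auto simp: copies_act_def lcoset_copies_def)
  show ?thesis
  proof unfold_locales
    fix z show "?act \<one> z = z"
      using lcos_one_lcosets[OF M] by (auto simp: copies_act_def lcoset_copies_def)
  next
    fix g h z assume g: "g \<in> carrier G" and h: "h \<in> carrier G"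
    show "?act (g \<otimes> h) z = ?act g (?act h z)"
    proof (cases "z \<in> ?Om")
      case True
      then obtain i j C where z: "z = ((i, j), C)" "i < n" "C \<in> lcosets (M i)"
        unfolding lcoset_copies_def by blast
      have "?act h z \<in> ?Om" using closed[OF h True] .
      then show ?thesis
        using True z lcos_mult_lcosets[OF M[OF z(2)] g h z(3)] by (simp add: copies_act_def)
    qed (simp add: copies_act_def)
  qed (use closed in \<open>simp_all add: copies_act_def\<close>)
qed

lemma card_fixed_points_lcoset_copies:
  assumes "finite (carrier G)" and "\<And>i. i < n \<Longrightarrow> subgroup (M i) G"
  shows "card (set_action.fixed_points (lcoset_copies G M n B) (copies_act G (lcoset_copies G M n B)) H)
    = (\<Sum>i<n. B ^ i * card (fixed_lcosets G (M i) H))"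
proof -
  interpret set_action G "lcoset_copies G M n B" "copies_act G (lcoset_copies G M n B)"
    using set_action_lcoset_copies[OF assms(2)] .
  have fin: "finite (fixed_lcosets G (M i) H)" for i
    using finite_lcosets[OF assms(1)] unfolding fixed_lcosets_def by simp
  have "fixed_points H = (\<Union>i<n. ({i} \<times> {..<B ^ i}) \<times> fixed_lcosets G (M i) H)"
    unfolding fixed_points_def fixed_lcosets_def by (auto simp: copies_act_def lcoset_copies_def)
  also have "card \<dots> = (\<Sum>i<n. card (({i} \<times> {..<B ^ i}) \<times> fixed_lcosets G (M i) H))"
    by (rule card_UN_disjoint) (use fin in auto)
  also have "\<dots> = (\<Sum>i<n. B ^ i * card (fixed_lcosets G (M i) H))"
    by (simp add: card_cartesian_product)
  finally show ?thesis .
qed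

lemma obtain_action_detecting_conjugacy:
  assumes fin: "finite (carrier G)"
  obtains Om :: "((nat \<times> nat) \<times> 'a set) set" and act
  where "set_action G Om act" and "finite Om"
    and "\<And>H1 H2. subgroup H1 G \<Longrightarrow> subgroup H2 G \<Longrightarrow>
           card (set_action.fixed_points Om act H1) = card (set_action.fixed_points Om act H2) \<Longrightarrow>
           conjugate_in G H1 H2"
proof -
  define S where "S = {M. subgroup M G}"
  have "finite S"
    using fin subgroup.subset by (auto simp: S_def intro: finite_subset[of _ "Pow (carrier G)"])
  then obtain M where M: "bij_betw M {0..<card S} S" using ex_bij_betw_nat_finite by blast
  define n where "n = card S"
  define B where "B = card (carrier G) + 1"
  define Om where "Om = lcoset_copies G M n B"
  have subgroup_M: "subgroup (M i) G" if "i < n" for i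
    using bij_betw_apply[OF M] that unfolding S_def n_def by auto
  have action: "set_action G Om (copies_act G Om)"
    unfolding Om_def by (rule set_action_lcoset_copies[OF subgroup_M])
  have "finite Om" unfolding Om_def lcoset_copies_def using finite_lcosets[OF fin] by simp
  have card_fixed: "card (set_action.fixed_points Om (copies_act G Om) H)
      = (\<Sum>i<n. B ^ i * card (fixed_lcosets G (M i) H))" for H
    unfolding Om_def by (rule card_fixed_points_lcoset_copies[OF fin subgroup_M])
  have digit_bound: "card (fixed_lcosets G (M i) H) < B" if "i < n" for i H
  proof -
    have "card (fixed_lcosets G (M i) H) \<le> card (lcosets (M i))"
      using finite_lcosets[OF fin] unfolding fixed_lcosets_def by (simp add: card_mono)
    then show ?thesis using card_lcosets_le[OF fin, of "M i"] unfolding B_def by linarith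
  qed
  have "conjugate_in G H1 H2"
    if H1: "subgroup H1 G" and H2: "subgroup H2 G"
      and eq: "card (set_action.fixed_points Om (copies_act G Om) H1)
             = card (set_action.fixed_points Om (copies_act G Om) H2)" for H1 H2
  proof (rule conjugate_in_if_card_fixed_lcosets_eq[OF fin H1 H2])
    fix K assume "subgroup K G"
    then have "K \<in> M ` {0..<n}" using bij_betw_imp_surj_on[OF M] unfolding S_def n_def by simp
    then obtain i where "K = M i" "i < n" by auto
    moreover have "\<forall>i<n. card (fixed_lcosets G (M i) H1) = card (fixed_lcosets G (M i) H2)"
      by (rule base_digits_eq_if_sum_eq) (use digit_bound eq[unfolded card_fixed] in auto)
    ultimately show "card (fixed_lcosets G K H1) = card (fixed_lcosets G K H2)" by blast
  qed
  then show ?thesis using that action \<open>finite Om\<close> by blast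
qed

end

section \<open>The wreath product with a dihedral group\<close>

lemma mod_add_mult_mod_eq: "((a::int) + b * (c mod m)) mod m = (a + b * c) mod m"
  by (metis mod_add_right_eq mod_mult_right_eq)

locale dihedral_wreath = set_action G Om act
  for G :: "('a, 'b) monoid_scheme" (structure) and Om :: "'x set" and act +
  fixes q :: nat
  assumes finite_Om: "finite Om"
    and prime_q: "Factorial_Ring.prime q" and odd_q: "odd q"
    and q_not_dvd_order: "\<not> q dvd order G"
begin

text \<open>An element \<open>(f, s, g)\<close> of the wreath product of the dihedral group \<open>\<int>/q \<rtimes> {1, -1}\<close> of order \<open>2q\<close>
  with \<open>G\<close> over \<open>Om\<close>: \<open>f\<close> and \<open>s\<close> give the translation (represented in \<open>{0..<q}\<close>) and the sign in
  each coordinate, and \<open>g\<close> acts by permuting the coordinates.\<close>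
definition base :: "(('x \<Rightarrow> int) \<times> ('x \<Rightarrow> int)) set" where
  "base = {(f, s). \<forall>z. if z \<in> Om then f z \<in> {0..<int q} \<and> s z \<in> {1, -1} else f z = 0 \<and> s z = 1}"

definition wreath :: "(('x \<Rightarrow> int) \<times> ('x \<Rightarrow> int) \<times> 'a) monoid" where
  "wreath = \<lparr>carrier = {(f, s, g). (f, s) \<in> base \<and> g \<in> carrier G},
     monoid.mult = (\<lambda>(f, s, g) (f', s', g').
       (\<lambda>z. (f z + s z * f' (act (inv g) z)) mod int q, \<lambda>z. s z * s' (act (inv g) z), g \<otimes> g')),
     one = (\<lambda>_. 0, \<lambda>_. 1, \<one>)\<rparr>"

definition proj :: "('x \<Rightarrow> int) \<times> ('x \<Rightarrow> int) \<times> 'a \<Rightarrow> 'a" where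
  "proj w = snd (snd w)"

lemma wreath_carrier [simp]: "(f, s, g) \<in> carrier wreath \<longleftrightarrow> (f, s) \<in> base \<and> g \<in> carrier G"
  by (simp add: wreath_def)

lemma wreath_mult [simp]:
  "(f, s, g) \<otimes>\<^bsub>wreath\<^esub> (f', s', g') =
     (\<lambda>z. (f z + s z * f' (act (inv g) z)) mod int q, \<lambda>z. s z * s' (act (inv g) z), g \<otimes> g')"
  by (simp add: wreath_def)

lemma wreath_one [simp]: "\<one>\<^bsub>wreath\<^esub> = (\<lambda>_. 0, \<lambda>_. 1, \<one>)"
  by (simp add: wreath_def)

lemma q_gt_2: "2 < q"
  using prime_q odd_q prime_ge_2_nat by (metis dvd_refl le_neq_implies_less)

lemma base_range: "(f, s) \<in> base \<Longrightarrow> 0 \<le> f z \<and> f z < int q"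
  using q_gt_2 unfolding base_def by (cases "z \<in> Om") (auto dest: spec[of _ z])

lemma base_sign: "(f, s) \<in> base \<Longrightarrow> s z = 1 \<or> s z = -1"
  unfolding base_def by (cases "z \<in> Om") (auto dest: spec[of _ z])

lemma base_outside: "(f, s) \<in> base \<Longrightarrow> z \<notin> Om \<Longrightarrow> f z = 0 \<and> s z = 1"
  unfolding base_def by (auto dest: spec[of _ z])

lemma wreath_mult_closed:
  assumes "x \<in> carrier wreath" and "y \<in> carrier wreath"
  shows "x \<otimes>\<^bsub>wreath\<^esub> y \<in> carrier wreath"
proof -
  obtain f s g f' s' g' where xy: "x = (f, s, g)" "y = (f', s', g')" by (cases x, cases y) auto
  have b: "(f, s) \<in> base" "(f', s') \<in> base" and g: "g \<in> carrier G" "g' \<in> carrier G"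
    using assms xy by auto
  have "(\<lambda>z. (f z + s z * f' (act (inv g) z)) mod int q, \<lambda>z. s z * s' (act (inv g) z)) \<in> base"
    unfolding base_def
  proof (clarsimp, intro conjI impI allI)
    fix z assume "z \<notin> Om"
    then show "(f z + s z * f' (act (inv g) z)) mod int q = 0" "s z * s' (act (inv g) z) = 1"
      using base_outside[OF b(1)] base_outside[OF b(2)] act_outside g(1) by auto
  next
    fix z
    show "0 \<le> (f z + s z * f' (act (inv g) z)) mod int q" "(f z + s z * f' (act (inv g) z)) mod int q < int q"
      using q_gt_2 by simp_all
    show "s z * s' (act (inv g) z) = 1 \<or> s z * s' (act (inv g) z) = - 1"
      using base_sign[OF b(1), of z] base_sign[OF b(2), of "act (inv g) z"] by auto
  qed
  then show ?thesis using xy g by simp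
qed

lemma group_wreath: "group wreath"
proof (rule groupI)
  show "\<one>\<^bsub>wreath\<^esub> \<in> carrier wreath" using q_gt_2 by (simp add: base_def)
next
  fix x y z assume "x \<in> carrier wreath" "y \<in> carrier wreath" "z \<in> carrier wreath"
  moreover obtain f s g f' s' g' f'' s'' g'' where "x = (f, s, g)" "y = (f', s', g')" "z = (f'', s'', g'')"
    by (cases x, cases y, cases z) auto
  ultimately show "x \<otimes>\<^bsub>wreath\<^esub> y \<otimes>\<^bsub>wreath\<^esub> z = x \<otimes>\<^bsub>wreath\<^esub> (y \<otimes>\<^bsub>wreath\<^esub> z)"
    by (simp add: m_assoc inv_mult_group act_mult mod_add_mult_mod_eq mod_simps algebra_simps)
next
  fix x assume x: "x \<in> carrier wreath"
  obtain f s g where xe: "x = (f, s, g)" by (cases x) auto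
  have b: "(f, s) \<in> base" and g: "g \<in> carrier G" using x xe by auto
  show "\<one>\<^bsub>wreath\<^esub> \<otimes>\<^bsub>wreath\<^esub> x = x"
    using xe g base_range[OF b] by (simp add: act_one)
  let ?y = "(\<lambda>z. (- s (act g z) * f (act g z)) mod int q, \<lambda>z. s (act g z), inv g)"
  have "?y \<in> carrier wreath"
    using g base_sign[OF b] base_outside[OF b] q_gt_2 act_mem_iff[OF g]
    by (simp add: base_def)
  moreover have "?y \<otimes>\<^bsub>wreath\<^esub> x = \<one>\<^bsub>wreath\<^esub>"
  proof -
    have "s z * s z = 1" for z using base_sign[OF b, of z] by auto
    then show ?thesis using xe g by (auto simp: mod_simps algebra_simps)
  qed
  ultimately show "\<exists>y\<in>carrier wreath. y \<otimes>\<^bsub>wreath\<^esub> x = \<one>\<^bsub>wreath\<^esub>" by blast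
qed (use wreath_mult_closed in blast)

lemma proj_hom: "proj \<in> hom wreath G"
  by (rule homI) (auto simp: proj_def)

lemma proj_surj: "proj ` carrier wreath = carrier G"
proof
  show "carrier G \<subseteq> proj ` carrier wreath"
  proof
    fix g assume "g \<in> carrier G"
    then have "(\<lambda>_. 0, \<lambda>_. 1, g) \<in> carrier wreath" using q_gt_2 by (simp add: base_def)
    moreover have "proj (\<lambda>_. 0, \<lambda>_. 1, g) = g" by (simp add: proj_def)
    ultimately show "g \<in> proj ` carrier wreath" by (metis image_eqI)
  qed
qed (auto simp: proj_def)

lemma finite_wreath: "finite (carrier wreath)"
proof -
  have fin_carrier: "finite (carrier G)" \<comment> \<open>an infinite carrier has order \<open>0\<close>\<close>
    using q_not_dvd_order unfolding order_def by (metis card.infinite dvd_0_right)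
  let ?F = "{f. \<forall>z. (z \<in> Om \<longrightarrow> f z \<in> {0..<int q}) \<and> (z \<notin> Om \<longrightarrow> f z = 0)}"
  let ?S = "{s. \<forall>z. (z \<in> Om \<longrightarrow> s z \<in> {1, -1 :: int}) \<and> (z \<notin> Om \<longrightarrow> s z = 1)}"
  have "carrier wreath \<subseteq> ?F \<times> ?S \<times> carrier G"
    unfolding wreath_def base_def by (auto split: if_splits)
  moreover have "finite (?F \<times> ?S \<times> carrier G)"
    using finite_Om fin_carrier by (intro finite_cartesian_product finite_set_of_finite_funs) simp_all
  ultimately show ?thesis by (rule finite_subset)
qed

lemma subgroup_preimage_proj: "subgroup H G \<Longrightarrow> subgroup (preimage_in wreath proj H) wreath"
  unfolding preimage_in_def
  by (rule group_hom.subgroup_preimage) (simp_all add: group_hom_def group_hom_axioms_def group_wreath is_group proj_hom)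

definition coord :: "'x \<Rightarrow> int \<Rightarrow> ('x \<Rightarrow> int) \<times> ('x \<Rightarrow> int) \<times> 'a" where
  "coord x a = (\<lambda>z. if z = x then a else 0, \<lambda>_. 1, \<one>)"

definition coord_subgroup :: "'x \<Rightarrow> (('x \<Rightarrow> int) \<times> ('x \<Rightarrow> int) \<times> 'a) set" where
  "coord_subgroup x = coord x ` {0..<int q}"

lemma coord_carrier: "x \<in> Om \<Longrightarrow> 0 \<le> a \<Longrightarrow> a < int q \<Longrightarrow> coord x a \<in> carrier wreath"
  unfolding coord_def by (simp add: base_def)

lemma coord_mult: "coord x a \<otimes>\<^bsub>wreath\<^esub> coord x b = coord x ((a + b) mod int q)"
  unfolding coord_def by (auto simp: act_one)

lemma coord_zero: "coord x 0 = \<one>\<^bsub>wreath\<^esub>"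
  unfolding coord_def by auto

lemma coord_eq_iff: "a \<noteq> 0 \<Longrightarrow> coord x a = coord y b \<longleftrightarrow> x = y \<and> a = b"
  unfolding coord_def by (auto simp: fun_eq_iff)

lemma card_coord_subgroup: "card (coord_subgroup x) = q"
proof -
  have "inj_on (coord x) {0..<int q}" by (auto simp: inj_on_def coord_def fun_eq_iff)
  then show ?thesis unfolding coord_subgroup_def by (simp add: card_image)
qed

lemma mult_coord:
  assumes "(f, s, g) \<in> carrier wreath"
  shows "(f, s, g) \<otimes>\<^bsub>wreath\<^esub> coord x a
    = coord (act g x) ((s (act g x) * a) mod int q) \<otimes>\<^bsub>wreath\<^esub> (f, s, g)"
proof -
  have g: "g \<in> carrier G" and b: "(f, s) \<in> base" using assms by auto
  have "act (inv g) z = x \<longleftrightarrow> z = act g x" for z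
    using act_act_inv[OF g] act_inv_act[OF g] by metis
  then show ?thesis
    using base_range[OF b] g unfolding coord_def by (auto simp: fun_eq_iff act_one mod_simps add.commute)
qed

lemma subgroup_coord_subgroup:
  assumes x: "x \<in> Om"
  shows "subgroup (coord_subgroup x) wreath"
proof (rule group.subgroupI[OF group_wreath])
  show "coord_subgroup x \<subseteq> carrier wreath"
    unfolding coord_subgroup_def using coord_carrier[OF x] by auto
  show "coord_subgroup x \<noteq> {}" unfolding coord_subgroup_def using q_gt_2 by auto
next
  fix a assume "a \<in> coord_subgroup x"
  then obtain u where u: "a = coord x u" "0 \<le> u" "u < int q" unfolding coord_subgroup_def by auto
  have "inv\<^bsub>wreath\<^esub> a = coord x (- u mod int q)"
  proof (rule group.inv_equality[OF group_wreath])
    show "coord x (- u mod int q) \<otimes>\<^bsub>wreath\<^esub> a = \<one>\<^bsub>wreath\<^esub>"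
      unfolding u(1) coord_mult by (simp add: mod_add_left_eq coord_zero)
  qed (use u coord_carrier[OF x] q_gt_2 in auto)
  then show "inv\<^bsub>wreath\<^esub> a \<in> coord_subgroup x" unfolding coord_subgroup_def using q_gt_2 by auto
next
  fix a b assume "a \<in> coord_subgroup x" "b \<in> coord_subgroup x"
  then show "a \<otimes>\<^bsub>wreath\<^esub> b \<in> coord_subgroup x"
    unfolding coord_subgroup_def using q_gt_2 by (auto simp: coord_mult)
qed

lemma normal_coord_subgroup_iff:
  assumes H: "subgroup H G" and x: "x \<in> Om"
  shows "coord_subgroup x \<lhd> wreath\<lparr>carrier := preimage_in wreath proj H\<rparr> \<longleftrightarrow> x \<in> fixed_points H"
  unfolding group.normal_in_subgroup_iff[OF group_wreath subgroup_preimage_proj[OF H]]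
proof safe
  assume commute: "\<forall>w\<in>preimage_in wreath proj H. \<forall>l\<in>coord_subgroup x.
    \<exists>l'\<in>coord_subgroup x. w \<otimes>\<^bsub>wreath\<^esub> l = l' \<otimes>\<^bsub>wreath\<^esub> w"
  have "act h x = x" if h: "h \<in> H" for h
  proof -
    have hG: "h \<in> carrier G" using subgroup.mem_carrier[OF H h] .
    define w :: "('x \<Rightarrow> int) \<times> ('x \<Rightarrow> int) \<times> 'a" where "w = (\<lambda>_. 0, \<lambda>_. 1, h)"
    have wW: "w \<in> carrier wreath" and "w \<in> preimage_in wreath proj H"
      using hG h q_gt_2 by (simp_all add: w_def preimage_in_def proj_def base_def)
    moreover have "coord x 1 \<in> coord_subgroup x" unfolding coord_subgroup_def using q_gt_2 by auto
    ultimately obtain l' where l': "l' \<in> coord_subgroup x" "w \<otimes>\<^bsub>wreath\<^esub> coord x 1 = l' \<otimes>\<^bsub>wreath\<^esub> w"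
      using commute by meson
    then obtain b where "w \<otimes>\<^bsub>wreath\<^esub> coord x 1 = coord x b \<otimes>\<^bsub>wreath\<^esub> w" "0 \<le> b" "b < int q"
      unfolding coord_subgroup_def by auto
    moreover have "w \<otimes>\<^bsub>wreath\<^esub> coord x 1 = coord (act h x) 1 \<otimes>\<^bsub>wreath\<^esub> w"
      using mult_coord[of _ _ h x 1] wW q_gt_2 unfolding w_def by simp
    ultimately have "coord (act h x) 1 = coord x b"
      using group.right_cancel[OF group_wreath wW] coord_carrier[OF act_closed[OF hG x]]
        coord_carrier[OF x] q_gt_2 by simp
    then show "act h x = x" using coord_eq_iff by simp
  qed
  then show "x \<in> fixed_points H" using x unfolding fixed_points_def by blast
next
  assume fixed: "x \<in> fixed_points H"
  show "subgroup (coord_subgroup x) wreath" using subgroup_coord_subgroup[OF x] .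
  show "l \<in> preimage_in wreath proj H" if "l \<in> coord_subgroup x" for l
    using that coord_carrier[OF x] subgroup.one_closed[OF H]
    by (auto simp: coord_subgroup_def preimage_in_def proj_def coord_def)
  fix w l assume w: "w \<in> preimage_in wreath proj H" and l: "l \<in> coord_subgroup x"
  obtain f s g where we: "w = (f, s, g)" by (cases w) auto
  have wW: "(f, s, g) \<in> carrier wreath" and "g \<in> H" using w we by (auto simp: preimage_in_def proj_def)
  then have gx: "act g x = x" using fixed unfolding fixed_points_def by simp
  obtain u where u: "l = coord x u" using l unfolding coord_subgroup_def by auto
  have "coord x ((s x * u) mod int q) \<in> coord_subgroup x"
    unfolding coord_subgroup_def using q_gt_2 by auto
  then show "\<exists>l'\<in>coord_subgroup x. w \<otimes>\<^bsub>wreath\<^esub> l = l' \<otimes>\<^bsub>wreath\<^esub> w"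
    using mult_coord[OF wW, of x u] unfolding we u gx by blast
qed

lemma pow_sign:
  "\<exists>F. (f, s, \<one>) [^]\<^bsub>wreath\<^esub> (n :: nat) = (F, \<lambda>z. s z ^ n, \<one>)"
proof (induction n)
  case (Suc n)
  then obtain F where "(f, s, \<one>) [^]\<^bsub>wreath\<^esub> n = (F, \<lambda>z. s z ^ n, \<one>)" by blast
  then show ?case by (simp add: act_one mult.commute)
qed simp

lemma prime_order_subgroup_translations:
  assumes L: "subgroup L wreath" and "card L = q" and l: "l \<in> L"
  shows "\<exists>f. l = (f, \<lambda>_. 1, \<one>)"
proof -
  have "proj l = \<one>"
    using group_hom.hom_eq_one_on_prime_order_subgroup[OF _ prime_q q_not_dvd_order L assms(2) l]
      group_wreath is_group proj_hom by (simp add: group_hom_def group_hom_axioms_def)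
  moreover obtain f s g where le: "l = (f, s, g)" by (cases l) auto
  ultimately have l1: "l = (f, s, \<one>)" by (simp add: proj_def)
  have b: "(f, s) \<in> base" using subgroup.mem_carrier[OF L l] l1 by simp
  obtain F where "(f, s, \<one>) [^]\<^bsub>wreath\<^esub> q = (F, \<lambda>z. s z ^ q, \<one>)" using pow_sign by blast
  moreover have "l [^]\<^bsub>wreath\<^esub> q = \<one>\<^bsub>wreath\<^esub>"
    using group.pow_card_subgroup_eq_one[OF group_wreath L l] assms(2) by simp
  ultimately have "s z ^ q = 1" for z using l1 by (simp add: fun_eq_iff)
  then have "s z = 1" for z using base_sign[OF b, of z] odd_q by (metis neg_one_odd_power)
  then show ?thesis using l1 by (auto simp: fun_eq_iff)
qed

definition negate_except :: "'x \<Rightarrow> ('x \<Rightarrow> int) \<times> ('x \<Rightarrow> int) \<times> 'a" where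
  "negate_except x = (\<lambda>_. 0, \<lambda>z. if z \<in> Om \<and> z \<noteq> x then -1 else 1, \<one>)"

lemma negate_except_preimage: "subgroup H G \<Longrightarrow> negate_except x \<in> preimage_in wreath proj H"
  using q_gt_2 subgroup.one_closed
  by (auto simp: negate_except_def preimage_in_def proj_def base_def)

text \<open>Conjugating a translation \<open>t\<close> by \<open>negate_except x\<close> negates it off \<open>x\<close>, so \<open>t\<close> times its
  conjugate is supported at \<open>x\<close> alone.\<close>
lemma coord_mem_if_normal:
  assumes L: "subgroup L wreath"
    and transl: "\<And>l. l \<in> L \<Longrightarrow> \<exists>f. l = (f, \<lambda>_. 1, \<one>)"
    and commute: "\<And>l. l \<in> L \<Longrightarrow> \<exists>l'\<in>L. negate_except x \<otimes>\<^bsub>wreath\<^esub> l = l' \<otimes>\<^bsub>wreath\<^esub> negate_except x"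
    and t: "(f, \<lambda>_. 1, \<one>) \<in> L" and x: "x \<in> Om"
  shows "coord x ((2 * f x) mod int q) \<in> L"
proof -
  define sg where "sg z = (if z \<in> Om \<and> z \<noteq> x then -1 else 1 :: int)" for z
  obtain l' where l': "l' \<in> L" "negate_except x \<otimes>\<^bsub>wreath\<^esub> (f, \<lambda>_. 1, \<one>) = l' \<otimes>\<^bsub>wreath\<^esub> negate_except x"
    using commute[OF t] by blast
  obtain f' where f': "l' = (f', \<lambda>_. 1, \<one>)" using transl[OF l'(1)] by blast
  have b: "(f, \<lambda>_. 1) \<in> base" "(f', \<lambda>_. 1) \<in> base"
    using subgroup.mem_carrier[OF L t] subgroup.mem_carrier[OF L l'(1)] f' by auto
  have "(\<lambda>z. (sg z * f z) mod int q) = (\<lambda>z. f' z mod int q)"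
    using l'(2) unfolding f' negate_except_def sg_def[symmetric] by (simp add: act_one)
  then have f'_eq: "f' z = (sg z * f z) mod int q" for z
    using base_range[OF b(2), of z] by (metis mod_pos_pos_trivial)
  have "(f, \<lambda>_. 1, \<one>) \<otimes>\<^bsub>wreath\<^esub> l' = coord x ((2 * f x) mod int q)"
  proof -
    have "(f z + f' z) mod int q = (if z = x then (2 * f x) mod int q else 0)" for z
      using x base_outside[OF b(1), of z] unfolding f'_eq sg_def by (auto simp: mod_simps)
    then show ?thesis unfolding f' coord_def by (simp add: act_one fun_eq_iff)
  qed
  then show ?thesis using subgroup.m_closed[OF L t l'(1)] by simp
qed

lemma double_mod_q_pos:
  assumes "0 < a" and "a < int q"
  shows "0 < (2 * a) mod int q"
proof -
  have "\<not> int q dvd 2" using q_gt_2 by (auto dest: zdvd_imp_le)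
  moreover have "\<not> int q dvd a" using assms by (auto dest: zdvd_imp_le)
  ultimately have "\<not> int q dvd 2 * a" using prime_q by (simp add: prime_dvd_mult_iff prime_nat_int_transfer)
  then have "(2 * a) mod int q \<noteq> 0" by (simp add: dvd_eq_mod_eq_0)
  moreover have "0 \<le> (2 * a) mod int q" using q_gt_2 by simp
  ultimately show ?thesis by simp
qed

lemma normal_subgroup_of_order_q_is_coord_subgroup:
  assumes H: "subgroup H G"
    and normal: "L \<in> normal_subgroups_of_order (wreath\<lparr>carrier := preimage_in wreath proj H\<rparr>) q"
  shows "\<exists>x\<in>fixed_points H. L = coord_subgroup x"
proof -
  have L: "subgroup L wreath" and card_L: "card L = q"
    and commute: "\<And>w l. w \<in> preimage_in wreath proj H \<Longrightarrow> l \<in> L \<Longrightarrow> \<exists>l'\<in>L. w \<otimes>\<^bsub>wreath\<^esub> l = l' \<otimes>\<^bsub>wreath\<^esub> w"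
    using normal group.normal_in_subgroup_iff[OF group_wreath subgroup_preimage_proj[OF H]]
    unfolding normal_subgroups_of_order_def by auto
  note transl = prime_order_subgroup_translations[OF L card_L]
  have "L \<noteq> {\<one>\<^bsub>wreath\<^esub>}" using card_L q_gt_2 by auto
  then obtain t where t: "t \<in> L" "t \<noteq> \<one>\<^bsub>wreath\<^esub>" using subgroup.one_closed[OF L] by blast
  obtain f where tf: "t = (f, \<lambda>_. 1, \<one>)" using transl[OF t(1)] by blast
  have b: "(f, \<lambda>_. 1) \<in> base" using subgroup.mem_carrier[OF L t(1)] tf by simp
  obtain x where fx: "f x \<noteq> 0" using t(2) tf by (auto simp: fun_eq_iff)
  have x: "x \<in> Om" using base_outside[OF b] fx by blast
  define c where "c = (2 * f x) mod int q"
  have c: "0 < c" "c < int q"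
    unfolding c_def using double_mod_q_pos base_range[OF b, of x] fx q_gt_2 by simp_all
  have "coord x c \<in> L"
    unfolding c_def using coord_mem_if_normal[OF L transl commute[OF negate_except_preimage[OF H]]] t(1) tf x
    by blast
  moreover have "coord x c \<in> coord_subgroup x" unfolding coord_subgroup_def using c by auto
  moreover have "coord x c \<noteq> \<one>\<^bsub>wreath\<^esub>" using coord_eq_iff[of c x x 0] c by (simp add: coord_zero)
  ultimately have "L = coord_subgroup x"
    using group.prime_order_subgroups_eq[OF group_wreath prime_q L subgroup_coord_subgroup[OF x] card_L
        card_coord_subgroup] by blast
  moreover have "x \<in> fixed_points H"
    using normal_coord_subgroup_iff[OF H x] normal calculation unfolding normal_subgroups_of_order_def by simp
  ultimately show ?thesis by blast
qed

lemma normal_subgroups_of_order_preimage: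
  assumes H: "subgroup H G"
  shows "normal_subgroups_of_order (wreath\<lparr>carrier := preimage_in wreath proj H\<rparr>) q
    = coord_subgroup ` fixed_points H"
proof (intro equalityI subsetI)
  fix L assume "L \<in> normal_subgroups_of_order (wreath\<lparr>carrier := preimage_in wreath proj H\<rparr>) q"
  then show "L \<in> coord_subgroup ` fixed_points H"
    using normal_subgroup_of_order_q_is_coord_subgroup[OF H] by blast
next
  fix L assume "L \<in> coord_subgroup ` fixed_points H"
  then obtain x where x: "x \<in> fixed_points H" and L: "L = coord_subgroup x" by blast
  have "x \<in> Om" using x unfolding fixed_points_def by simp
  then show "L \<in> normal_subgroups_of_order (wreath\<lparr>carrier := preimage_in wreath proj H\<rparr>) q"
    using normal_coord_subgroup_iff[OF H] x card_coord_subgroup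
    unfolding L normal_subgroups_of_order_def by simp
qed

lemma card_normal_subgroups_of_order_preimage:
  assumes H: "subgroup H G"
  shows "card (normal_subgroups_of_order (wreath\<lparr>carrier := preimage_in wreath proj H\<rparr>) q)
    = card (fixed_points H)"
proof -
  have "inj_on coord_subgroup (fixed_points H)"
  proof
    fix x y assume "coord_subgroup x = coord_subgroup y"
    then have "coord x 1 \<in> coord_subgroup y" unfolding coord_subgroup_def using q_gt_2 by auto
    then show "x = y" unfolding coord_subgroup_def using coord_eq_iff[of 1 x] by auto
  qed
  then show ?thesis unfolding normal_subgroups_of_order_preimage[OF H] by (rule card_image)
qed

lemma card_fixed_points_eq_if_preimages_iso:
  assumes H1: "subgroup H1 G" and H2: "subgroup H2 G"
    and iso: "wreath\<lparr>carrier := preimage_in wreath proj H1\<rparr> \<cong> wreath\<lparr>carrier := preimage_in wreath proj H2\<rparr>"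
  shows "card (fixed_points H1) = card (fixed_points H2)"
  using card_normal_subgroups_of_order_iso[OF _ _ iso]
    group.subgroup_imp_group[OF group_wreath subgroup_preimage_proj[OF H1]]
    group.subgroup_imp_group[OF group_wreath subgroup_preimage_proj[OF H2]]
    card_normal_subgroups_of_order_preimage[OF H1] card_normal_subgroups_of_order_preimage[OF H2]
  by simp

end

section \<open>Transport to a group on the natural numbers\<close>

lemma (in group) obtain_nat_group_iso:
  assumes "finite (carrier G)"
  obtains Gt :: "nat monoid" and e where "group Gt" and "finite (carrier Gt)" and "e \<in> iso Gt G"
proof -
  define A where "A = {0..<card (carrier G)}"
  obtain e where e: "bij_betw e A (carrier G)"
    using ex_bij_betw_nat_finite[OF assms] unfolding A_def by blast
  define e' where "e' = inv_into A e"
  define Gt :: "nat monoid" where "Gt = \<lparr>carrier = A, monoid.mult = (\<lambda>a b. e' (e a \<otimes> e b)), one = e' \<one>\<rparr>"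
  have e'_e: "e (e' x) = x" if "x \<in> carrier G" for x
    using that bij_betw_inv_into_right[OF e] unfolding e'_def by blast
  have "e' \<in> iso G Gt"
  proof (rule isoI)
    show "e' \<in> hom G Gt"
      using bij_betw_apply[OF bij_betw_inv_into[OF e]] e'_e by (intro homI) (simp_all add: Gt_def e'_def)
    show "bij_betw e' (carrier G) (carrier Gt)"
      using bij_betw_inv_into[OF e] by (simp add: Gt_def e'_def)
  qed
  moreover have "Gt\<lparr>one := e' \<one>\<rparr> = Gt" by (simp add: Gt_def)
  ultimately have "group Gt" using iso_imp_img_group by metis
  moreover have "finite (carrier Gt)" by (simp add: Gt_def A_def)
  ultimately show ?thesis using that iso_set_sym \<open>e' \<in> iso G Gt\<close> by blast
qed

lemma iso_preimages_iff:
  assumes Gt: "group Gt" and W: "group W" and G: "group G"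
    and e: "e \<in> iso Gt W" and psi: "\<psi> \<in> hom W G" and H1: "subgroup H1 G" and H2: "subgroup H2 G"
  shows "Gt\<lparr>carrier := preimage_in Gt (\<psi> \<circ> e) H1\<rparr> \<cong> Gt\<lparr>carrier := preimage_in Gt (\<psi> \<circ> e) H2\<rparr> \<longleftrightarrow>
         W\<lparr>carrier := preimage_in W \<psi> H1\<rparr> \<cong> W\<lparr>carrier := preimage_in W \<psi> H2\<rparr>"
proof -
  have "group_hom Gt G (\<psi> \<circ> e)"
    using hom_compose[OF iso_imp_homomorphism[OF e] psi] Gt G
    by (simp add: group_hom_def group_hom_axioms_def)
  then have P: "subgroup (preimage_in Gt (\<psi> \<circ> e) H) Gt" if "subgroup H G" for H
    unfolding preimage_in_def using group_hom.subgroup_preimage[OF _ that, of Gt "\<psi> \<circ> e"] by simp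
  have bij: "bij_betw e (carrier Gt) (carrier W)" using e unfolding iso_def by blast
  have "e ` preimage_in Gt (\<psi> \<circ> e) H = preimage_in W \<psi> H" for H
    using bij_betw_imp_surj_on[OF bij] unfolding preimage_in_def by auto
  then have to_W: "Gt\<lparr>carrier := preimage_in Gt (\<psi> \<circ> e) H\<rparr> \<cong> W\<lparr>carrier := preimage_in W \<psi> H\<rparr>"
    if "subgroup H G" for H
    using iso_restrict[OF e Gt W P[OF that]] unfolding is_iso_def by auto
  have from_W: "W\<lparr>carrier := preimage_in W \<psi> H\<rparr> \<cong> Gt\<lparr>carrier := preimage_in Gt (\<psi> \<circ> e) H\<rparr>"
    if "subgroup H G" for H
    using group.iso_sym[OF group.subgroup_imp_group[OF Gt P[OF that]] to_W[OF that]] .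
  show ?thesis
    using to_W[OF H1] to_W[OF H2] from_W[OF H1] from_W[OF H2] iso_trans by metis
qed

theorem theorem1p1:
  fixes G :: "('a, 'b) monoid_scheme"
  assumes "group G" and "finite (carrier G)"
  shows "\<exists>(Gt :: nat monoid) (\<phi> :: nat \<Rightarrow> 'a).
           group Gt \<and> finite (carrier Gt) \<and> \<phi> \<in> hom Gt G \<and> \<phi> ` carrier Gt = carrier G \<and>
           (\<forall>G1 G2. subgroup G1 G \<and> subgroup G2 G \<and> \<not> conjugate_in G G1 G2 \<longrightarrow>
              \<not> (Gt\<lparr>carrier := preimage_in Gt \<phi> G1\<rparr> \<cong> Gt\<lparr>carrier := preimage_in Gt \<phi> G2\<rparr>))"
proof -
  interpret G: group G by fact
  obtain Om :: "((nat \<times> nat) \<times> 'a set) set" and act where action: "set_action G Om act" "finite Om"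
    and detects: "\<And>H1 H2. subgroup H1 G \<Longrightarrow> subgroup H2 G \<Longrightarrow>
      card (set_action.fixed_points Om act H1) = card (set_action.fixed_points Om act H2) \<Longrightarrow>
      conjugate_in G H1 H2"
    using G.obtain_action_detecting_conjugacy[OF assms(2)] by metis
  obtain q where q: "Factorial_Ring.prime q" "order G + 2 < q" using bigger_prime by blast
  have "odd q" using q prime_odd_nat by auto
  moreover have "\<not> q dvd order G"
    using q G.order_gt_0_iff_finite assms(2) by (auto dest: dvd_imp_le)
  ultimately interpret W: dihedral_wreath G Om act q
    using action q by (simp add: dihedral_wreath_def dihedral_wreath_axioms_def)
  obtain Gt :: "nat monoid" and e where Gt: "group Gt" "finite (carrier Gt)" "e \<in> iso Gt W.wreath"
    using group.obtain_nat_group_iso[OF W.group_wreath W.finite_wreath] by metis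
  have "W.proj \<circ> e \<in> hom Gt G"
    using hom_compose[OF iso_imp_homomorphism[OF Gt(3)] W.proj_hom] .
  moreover have "(W.proj \<circ> e) ` carrier Gt = carrier G"
    using Gt(3) W.proj_surj unfolding iso_def bij_betw_def image_comp[symmetric] by simp
  moreover have "\<not> (Gt\<lparr>carrier := preimage_in Gt (W.proj \<circ> e) G1\<rparr> \<cong> Gt\<lparr>carrier := preimage_in Gt (W.proj \<circ> e) G2\<rparr>)"
    if G1: "subgroup G1 G" and G2: "subgroup G2 G" and "\<not> conjugate_in G G1 G2" for G1 G2
  proof
    assume "Gt\<lparr>carrier := preimage_in Gt (W.proj \<circ> e) G1\<rparr> \<cong> Gt\<lparr>carrier := preimage_in Gt (W.proj \<circ> e) G2\<rparr>"
    then have "W.wreath\<lparr>carrier := preimage_in W.wreath W.proj G1\<rparr> \<cong> W.wreath\<lparr>carrier := preimage_in W.wreath W.proj G2\<rparr>"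
      using iso_preimages_iff[OF Gt(1) W.group_wreath assms(1) Gt(3) W.proj_hom G1 G2] by simp
    then show False using detects[OF G1 G2] W.card_fixed_points_eq_if_preimages_iso[OF G1 G2] that(3) by blast
  qed
  ultimately show ?thesis using Gt(1,2) by blast
qed

end
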